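(* Let $\varphi\in H^\infty$ be an outer function. Then the analytic Toeplitz operator $T_\varphi$ is embeddable into a $C_0$-semigroup of analytic Toeplitz operators on $H^2$.
   Context: $H^2$ is the Hardy space and $H^\infty$ the bounded analytic functions on the open unit disc $\mathbb{D}$. An outer function is one of the form $c\exp\left(\int_{\mathbb{T}}\frac{\zeta+z}{\zeta-z}\log k(\zeta)\,dm(\zeta)\right)$ with $|c|=1$ and $k>0$, $\log k\in L^1(\mathbb{T})$. For $\psi\in H^\infty$, the analytic Toeplitz operator $T_\psi$ is multiplication by $\psi$ on $H^2$. A bounded operator $T$ is embeddable into a $C_0$-semigroup of analytic Toeplitz operators if there is a strongly continuous semigroup $(T_t)_{t\ge0}$ ($T_0=\mathrm{Id}$, $T_{t+s}=T_tT_s$) with each $T_t$ an analytic Toeplitz operator and $T_1=T$. *)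

theory Defs
  imports "HOL-Analysis.Analysis"
begin

abbreviation unit_disc :: "complex set" where
  "unit_disc \<equiv> ball 0 1"

definition h2_mean :: "(complex \<Rightarrow> complex) \<Rightarrow> real \<Rightarrow> real" where
  "h2_mean f r = integral {0..2*pi} (\<lambda>t. (cmod (f (of_real r * cis t)))^2) / (2*pi)"

definition H2 :: "(complex \<Rightarrow> complex) set" where
  "H2 = {f. f holomorphic_on unit_disc \<and> bdd_above (h2_mean f ` {0..<1})}"

definition h2_norm :: "(complex \<Rightarrow> complex) \<Rightarrow> real" where
  "h2_norm f = sqrt (SUP r\<in>{0..<1}. h2_mean f r)"

definition Hinf :: "(complex \<Rightarrow> complex) set" where
  "Hinf = {f. f holomorphic_on unit_disc \<and> bounded (f ` unit_disc)}"

text \<open>Outer functions: c exp(\<integral> (\<zeta>+z)/(\<zeta>-z) log k(\<zeta>) dm(\<zeta>)) with |c|=1, k>0 on the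
circle and log k integrable; m is normalised arc length, parametrised by \<zeta> = e^{it}.\<close>
definition outer :: "(complex \<Rightarrow> complex) \<Rightarrow> bool" where
  "outer f \<longleftrightarrow> (\<exists>c k. cmod c = 1 \<and> (\<forall>t. k (cis t) > (0::real)) \<and>
     (\<lambda>t. ln (k (cis t))) absolutely_integrable_on {0..2*pi} \<and>
     (\<forall>z\<in>unit_disc. f z = c * exp (integral {0..2*pi}
        (\<lambda>t. (cis t + z) / (cis t - z) * of_real (ln (k (cis t)))) / (2*pi))))"

text \<open>Operators on H^2 are modelled as maps on functions, acting on elements of H2
and compared by their values on the disc.  T is the analytic Toeplitz operator with
symbol psi.\<close>
definition is_toeplitz_with :: "(complex \<Rightarrow> complex) \<Rightarrow> ((complex \<Rightarrow> complex) \<Rightarrow> (complex \<Rightarrow> complex)) \<Rightarrow> bool" where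
  "is_toeplitz_with \<psi> T \<longleftrightarrow> (\<forall>f\<in>H2. \<forall>z\<in>unit_disc. T f z = \<psi> z * f z)"

definition analytic_toeplitz_op :: "((complex \<Rightarrow> complex) \<Rightarrow> (complex \<Rightarrow> complex)) \<Rightarrow> bool" where
  "analytic_toeplitz_op T \<longleftrightarrow> (\<exists>\<psi>\<in>Hinf. is_toeplitz_with \<psi> T)"

definition C0_semigroup_H2 :: "(real \<Rightarrow> (complex \<Rightarrow> complex) \<Rightarrow> (complex \<Rightarrow> complex)) \<Rightarrow> bool" where
  "C0_semigroup_H2 T \<longleftrightarrow>
     (\<forall>t\<ge>0. \<forall>f\<in>H2. T t f \<in> H2) \<and>
     (\<forall>f\<in>H2. \<forall>z\<in>unit_disc. T 0 f z = f z) \<and>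
     (\<forall>t\<ge>0. \<forall>s\<ge>0. \<forall>f\<in>H2. \<forall>z\<in>unit_disc. T (t+s) f z = T t (T s f) z) \<and>
     (\<forall>f\<in>H2. \<forall>t0\<ge>0. ((\<lambda>t. h2_norm (\<lambda>z. T t f z - T t0 f z)) \<longlongrightarrow> 0) (at t0 within {0..}))"

definition embeddable_toeplitz_semigroup :: "((complex \<Rightarrow> complex) \<Rightarrow> (complex \<Rightarrow> complex)) \<Rightarrow> bool" where
  "embeddable_toeplitz_semigroup S \<longleftrightarrow>
     (\<exists>T. C0_semigroup_H2 T \<and> (\<forall>t\<ge>0. analytic_toeplitz_op (T t)) \<and>
          (\<forall>f\<in>H2. \<forall>z\<in>unit_disc. T 1 f z = S f z))"

end

theory Submission
  imports Defs "HOL-Complex_Analysis.Cauchy_Integral_Formula"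
begin

(* An outer function has no zeros in the disc, so \<phi> = exp v for a holomorphic v, and the
   functions \<phi>^t = exp (t v) satisfy |\<phi>^t| = |\<phi>|^t \<le> M^t: multiplication by \<phi>^t is a semigroup
   of analytic Toeplitz operators.  For strong continuity it suffices that (\<phi>^s - 1) f \<rightarrow> 0 in
   H^2 as s \<rightarrow> 0.  Splitting f into a Taylor polynomial and a small tail reduces this to
   \<parallel>\<phi>^s - 1\<parallel>^2 \<rightarrow> 0, and by Parseval \<parallel>\<phi>^s - 1\<parallel>^2 = \<parallel>\<phi>^s\<parallel>^2 - 2 Re \<phi>^s(0) + 1 \<le> M^(2s) - 2 Re \<phi>^s(0) + 1,
   which tends to 0.  All estimates are made on the circles of radius r < 1, uniformly in r. *)

lemma cis_mult_cnj_cis_has_integral: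
  fixes n m :: nat
  shows "((\<lambda>t. cis (real n * t) * cnj (cis (real m * t))) has_integral (if n = m then 2*pi else 0)) {0..2*pi}"
proof (cases "n = m")
  case True
  then show ?thesis using has_integral_const_real[of "1::complex" 0 "2*pi"]
    by (simp add: cis_cnj cis_mult scaleR_conv_of_real)
next
  case False
  define k where "k = real n - real m"
  have "k \<noteq> 0" using False by (simp add: k_def)
  have cis_k: "cis (real n * t) * cnj (cis (real m * t)) = cis (k * t)" for t
    by (simp add: cis_cnj cis_mult k_def algebra_simps)
  have antideriv: "((\<lambda>t. exp (\<i> * k * t) / (\<i> * k)) has_vector_derivative cis (k * x)) (at x within {0..2*pi})" for x
  proof -
    have "((\<lambda>z. exp (\<i> * k * z) / (\<i> * k)) has_field_derivative exp (\<i> * k * x)) (at (of_real x))"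
      using \<open>k \<noteq> 0\<close> by (auto intro!: derivative_eq_intros)
    from has_vector_derivative_real_field[OF this] show ?thesis
      by (simp add: cis_conv_exp mult_ac)
  qed
  have "((\<lambda>t. cis (k * t)) has_integral (exp (\<i> * k * of_real (2*pi)) / (\<i> * k) - exp (\<i> * k * of_real 0) / (\<i> * k))) {0..2*pi}"
    by (rule fundamental_theorem_of_calculus) (use antideriv in auto)
  moreover have "exp (\<i> * k * of_real (2*pi)) = 1"
  proof -
    have "cis (2*pi*k) = 1" by (rule cis_multiple_2pi) (simp add: k_def)
    then show ?thesis by (simp add: cis_conv_exp mult_ac)
  qed
  ultimately show ?thesis using False by (simp add: cis_k)
qed

lemma norm_trig_poly_squared_has_integral:
  fixes b :: "nat \<Rightarrow> complex"
  shows "((\<lambda>t. (cmod (\<Sum>n<N. b n * cis (real n * t)))^2) has_integral (2*pi * (\<Sum>n<N. (cmod (b n))^2))) {0..2*pi}"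
proof -
  define G where "G t = (\<Sum>n<N. \<Sum>m<N. b n * cnj (b m) * (cis (real n * t) * cnj (cis (real m * t))))" for t
  have "(G has_integral (\<Sum>n<N. \<Sum>m<N. b n * cnj (b m) * (if n = m then 2*pi else 0))) {0..2*pi}"
    unfolding G_def
    by (intro has_integral_sum has_integral_mult_right cis_mult_cnj_cis_has_integral finite_lessThan)
  also have "(\<Sum>n<N. \<Sum>m<N. b n * cnj (b m) * (if n = m then 2*pi else 0)) = of_real (2*pi * (\<Sum>n<N. (cmod (b n))^2))"
    by (simp add: if_distrib complex_norm_square sum_distrib_left mult_ac cong: if_cong del: of_real_power)
  finally have "((Re \<circ> G) has_integral Re (of_real (2*pi * (\<Sum>n<N. (cmod (b n))^2)))) {0..2*pi}"
    by (rule has_integral_linear[OF _ bounded_linear_Re])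
  moreover have "G t = of_real ((cmod (\<Sum>n<N. b n * cis (real n * t)))^2)" for t
    unfolding complex_norm_square G_def cnj_sum complex_cnj_mult sum_product by (simp add: mult_ac)
  ultimately show ?thesis by (simp add: o_def)
qed

lemma power_series_norm_summable_in_disc:
  fixes a :: "nat \<Rightarrow> complex"
  assumes "\<And>z. z \<in> unit_disc \<Longrightarrow> (\<lambda>n. a n * z^n) sums g z" and "cmod w < 1"
  shows "summable (\<lambda>n. norm (a n * w^n))"
proof -
  define \<rho> where "\<rho> = (1 + cmod w) / 2"
  have "of_real \<rho> \<in> unit_disc"
    unfolding mem_ball dist_0_norm norm_of_real using assms(2) by (simp add: \<rho>_def)
  then have "summable (\<lambda>n. a n * (of_real \<rho>)^n)" using assms(1) sums_summable by blast
  then show ?thesis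
    by (rule powser_insidea) (simp only: norm_of_real, use assms(2) in \<open>simp add: \<rho>_def\<close>)
qed

lemma h2_mean_power_series_sums:
  fixes a :: "nat \<Rightarrow> complex"
  assumes ser: "\<And>z. z \<in> unit_disc \<Longrightarrow> (\<lambda>n. a n * z^n) sums g z" and r: "0 \<le> r" "r < 1"
  shows "(\<lambda>n. (cmod (a n))^2 * r^(2*n)) sums h2_mean g r"
proof -
  have summ: "summable (\<lambda>n. norm (a n * (of_real r)^n))"
    by (rule power_series_norm_summable_in_disc[OF ser]) (use r in \<open>simp only: norm_of_real, simp\<close>)
  define A where "A = (\<Sum>n. norm (a n * (of_real r)^n))"
  define S where "S N t = (\<Sum>n<N. (a n * of_real r ^ n) * cis (real n * t))" for N t
  have S_eq: "S N t = (\<Sum>n<N. a n * (of_real r * cis t)^n)" for N t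
    unfolding S_def by (intro sum.cong refl) (simp only: power_mult_distrib Complex.DeMoivre mult.assoc)
  have S_bound: "cmod (S N t) \<le> A" for N t
  proof -
    have "cmod (S N t) \<le> (\<Sum>n<N. cmod (a n * of_real r ^ n * cis (real n * t)))"
      unfolding S_def by (rule norm_sum)
    also have "\<dots> = (\<Sum>n<N. norm (a n * (of_real r)^n))" by (simp add: norm_mult)
    also have "\<dots> \<le> A" unfolding A_def by (rule sum_le_suminf[OF summ]) auto
    finally show ?thesis .
  qed
  have S_integral: "((\<lambda>t. (cmod (S N t))^2) has_integral (2*pi * (\<Sum>n<N. (cmod (a n))^2 * r^(2*n)))) {0..2*pi}" for N
  proof -
    have "(cmod (a n * of_real r ^ n))^2 = (cmod (a n))^2 * r^(2*n)" for n
      using r by (simp add: norm_mult norm_power power_mult_distrib power_mult[symmetric] mult.commute[of 2])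
    then show ?thesis
      using norm_trig_poly_squared_has_integral[of "\<lambda>n. a n * of_real r ^ n" N] by (simp add: S_def)
  qed
  have S_lim: "(\<lambda>N. S N t) \<longlonglongrightarrow> g (of_real r * cis t)" for t
    using ser[of "of_real r * cis t"] r unfolding S_eq sums_def by (simp add: norm_mult)
  have "(\<lambda>N. integral {0..2*pi} (\<lambda>t. (cmod (S N t))^2)) \<longlonglongrightarrow> integral {0..2*pi} (\<lambda>t. (cmod (g (of_real r * cis t)))^2)"
  proof (intro dominated_convergence(2)[where h = "\<lambda>t. A^2"])
    show "(\<lambda>t. (cmod (S N t))^2) integrable_on {0..2*pi}" for N using S_integral by blast
    show "norm ((cmod (S N t))^2) \<le> A^2" for N t using S_bound[of N t] by (simp add: power_mono)
    show "(\<lambda>N. (cmod (S N t))^2) \<longlonglongrightarrow> (cmod (g (of_real r * cis t)))^2" for t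
      by (intro tendsto_intros S_lim)
  qed auto
  then have "(\<lambda>N. (2*pi * (\<Sum>n<N. (cmod (a n))^2 * r^(2*n))) / (2*pi)) \<longlonglongrightarrow> h2_mean g r"
    unfolding h2_mean_def integral_unique[OF S_integral] by (intro tendsto_intros) auto
  then show ?thesis unfolding sums_def by simp
qed

lemma h2_mean_integrable:
  assumes "continuous_on unit_disc f" "0 \<le> r" "r < 1"
  shows "(\<lambda>t. (cmod (f (of_real r * cis t)))^2) integrable_on {0..2*pi}"
proof -
  have "continuous_on {0..2*pi} (\<lambda>t. f (of_real r * cis t))"
    by (rule continuous_on_compose2[OF assms(1)])
       (use assms in \<open>auto intro!: continuous_intros simp: norm_mult\<close>)
  then show ?thesis by (intro integrable_continuous_interval continuous_intros)
qed

lemma h2_mean_nonneg: "0 \<le> h2_mean f r"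
  unfolding h2_mean_def
proof (cases "(\<lambda>t. (cmod (f (of_real r * cis t)))^2) integrable_on {0..2*pi}")
  case True
  then show "0 \<le> integral {0..2*pi} (\<lambda>t. (cmod (f (of_real r * cis t)))^2) / (2*pi)"
    by (intro divide_nonneg_pos integral_nonneg) auto
qed (simp add: not_integrable_integral)

lemma h2_mean_le_combination:
  assumes "continuous_on unit_disc f" "continuous_on unit_disc g1" "continuous_on unit_disc g2"
    and le: "\<And>z. z \<in> unit_disc \<Longrightarrow> (cmod (f z))^2 \<le> A * (cmod (g1 z))^2 + B * (cmod (g2 z))^2"
    and r: "0 \<le> r" "r < 1"
  shows "h2_mean f r \<le> A * h2_mean g1 r + B * h2_mean g2 r"
proof -
  let ?I = "\<lambda>h. integral {0..2*pi} (\<lambda>t. (cmod (h (of_real r * cis t)))^2)"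
  note integrable = h2_mean_integrable[OF _ r]
  have "?I f \<le> integral {0..2*pi} (\<lambda>t. A * (cmod (g1 (of_real r * cis t)))^2 + B * (cmod (g2 (of_real r * cis t)))^2)"
    by (rule integral_le)
       (use assms integrable in \<open>auto intro!: integrable_add integrable_on_mult_right simp: norm_mult\<close>)
  also have "\<dots> = A * ?I g1 + B * ?I g2"
    using assms integrable by (simp add: integral_add integrable_on_mult_right)
  finally have "?I f / (2*pi) \<le> (A * ?I g1 + B * ?I g2) / (2*pi)"
    by (rule divide_right_mono) simp
  then show ?thesis unfolding h2_mean_def by (simp add: add_divide_distrib)
qed

lemma h2_mean_le_scaled:
  assumes "continuous_on unit_disc f" "continuous_on unit_disc g"
    and "\<And>z. z \<in> unit_disc \<Longrightarrow> (cmod (f z))^2 \<le> A * (cmod (g z))^2" and "0 \<le> r" "r < 1"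
  shows "h2_mean f r \<le> A * h2_mean g r"
  using h2_mean_le_combination[of f g g A 0] assms by simp

lemma h2_mean_le_square_bound:
  assumes "continuous_on unit_disc f" "\<And>z. z \<in> unit_disc \<Longrightarrow> cmod (f z) \<le> K" "0 \<le> r" "r < 1"
  shows "h2_mean f r \<le> K^2"
  using h2_mean_le_scaled[of f "\<lambda>_. 1" "K^2" r] assms by (simp add: h2_mean_def power_mono)

lemma h2_norm_le_sqrt:
  assumes "\<And>r. 0 \<le> r \<Longrightarrow> r < 1 \<Longrightarrow> h2_mean g r \<le> b"
  shows "0 \<le> h2_norm g" "h2_norm g \<le> sqrt b"
proof -
  have bdd: "bdd_above (h2_mean g ` {0..<1})" using assms by (auto intro!: bdd_aboveI2)
  have "h2_mean g 0 \<le> (SUP r\<in>{0..<1}. h2_mean g r)" by (rule cSUP_upper[OF _ bdd]) simp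
  then show "0 \<le> h2_norm g" using h2_mean_nonneg[of g 0] by (simp add: h2_norm_def)
  have "(SUP r\<in>{0..<1}. h2_mean g r) \<le> b" by (rule cSUP_least) (use assms in auto)
  then show "h2_norm g \<le> sqrt b" by (simp add: h2_norm_def)
qed

lemma h2_mean_minus_one:
  assumes holo: "h holomorphic_on unit_disc" and r: "0 \<le> r" "r < 1"
  shows "h2_mean (\<lambda>z. h z - 1) r = h2_mean h r - 2 * Re (h 0) + 1"
proof -
  define c where "c n = (deriv ^^ n) h 0 / fact n" for n
  define d where "d n = c n - (if n = 0 then 1 else 0)" for n
  have ser: "(\<lambda>n. c n * z^n) sums h z" if "z \<in> unit_disc" for z
    using holomorphic_power_series[OF holo that] by (simp add: c_def)
  have "(\<lambda>n. d n * z^n) = (\<lambda>n. c n * z^n - (if n = 0 then z^n else 0))" for z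
    by (simp add: fun_eq_iff d_def left_diff_distrib)
  then have "(\<lambda>n. d n * z^n) sums (h z - 1)" if "z \<in> unit_disc" for z
    using sums_diff[OF ser[OF that] sums_single[of 0 "\<lambda>n. z^n"]] by simp
  then have "(\<lambda>n. (cmod (d n))^2 * r^(2*n) - (cmod (c n))^2 * r^(2*n))
      sums (h2_mean (\<lambda>z. h z - 1) r - h2_mean h r)"
    by (intro sums_diff h2_mean_power_series_sums ser r)
  moreover have "(\<lambda>n. (cmod (d n))^2 * r^(2*n) - (cmod (c n))^2 * r^(2*n))
      = (\<lambda>n. if n = 0 then (cmod (c 0 - 1))^2 - (cmod (c 0))^2 else 0)"
    by (simp add: fun_eq_iff d_def)
  ultimately have "h2_mean (\<lambda>z. h z - 1) r - h2_mean h r = (cmod (c 0 - 1))^2 - (cmod (c 0))^2"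
    using sums_single[of 0 "\<lambda>_. (cmod (c 0 - 1))^2 - (cmod (c 0))^2"] by (simp add: sums_unique2)
  also have "\<dots> = 1 - 2 * Re (h 0)" by (simp add: c_def cmod_power2 power2_diff)
  finally show ?thesis by simp
qed

lemma H2_h2_mean_bounded:
  assumes "f \<in> H2"
  obtains B where "\<And>r. 0 \<le> r \<Longrightarrow> r < 1 \<Longrightarrow> h2_mean f r \<le> B"
proof -
  from assms obtain B where "\<forall>r\<in>{0..<1}. h2_mean f r \<le> B" by (auto simp: H2_def bdd_above_def)
  then show ?thesis by (intro that) auto
qed

lemma H2_taylor_coeffs_square_summable:
  assumes f: "f \<in> H2"
  obtains a where "\<And>z. z \<in> unit_disc \<Longrightarrow> (\<lambda>n. a n * z^n) sums f z" "summable (\<lambda>n. (cmod (a n))^2)"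
proof -
  have holo: "f holomorphic_on unit_disc" using f by (simp add: H2_def)
  define a where "a n = (deriv ^^ n) f 0 / fact n" for n
  have ser: "(\<lambda>n. a n * z^n) sums f z" if "z \<in> unit_disc" for z
    using holomorphic_power_series[OF holo that] by (simp add: a_def)
  obtain B where B: "\<And>r. 0 \<le> r \<Longrightarrow> r < 1 \<Longrightarrow> h2_mean f r \<le> B"
    using H2_h2_mean_bounded[OF f] by blast
  have "(\<Sum>i<n. (cmod (a i))^2) \<le> B" for n
  proof (rule tendsto_le[of "at_left 1"])
    have "((\<lambda>r. \<Sum>i<n. (cmod (a i))^2 * r^(2*i)) \<longlongrightarrow> (\<Sum>i<n. (cmod (a i))^2 * 1^(2*i))) (at_left 1)"
      by (intro tendsto_intros)
    then show "((\<lambda>r. \<Sum>i<n. (cmod (a i))^2 * r^(2*i)) \<longlongrightarrow> (\<Sum>i<n. (cmod (a i))^2)) (at_left 1)"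
      by simp
    have "(\<Sum>i<n. (cmod (a i))^2 * r^(2*i)) \<le> B" if r: "r \<in> {0<..<1}" for r
    proof -
      have sums: "(\<lambda>i. (cmod (a i))^2 * r^(2*i)) sums h2_mean f r"
        by (rule h2_mean_power_series_sums[OF ser]) (use r in auto)
      have "(\<Sum>i<n. (cmod (a i))^2 * r^(2*i)) \<le> (\<Sum>i. (cmod (a i))^2 * r^(2*i))"
        by (rule sum_le_suminf[OF sums_summable[OF sums]]) (use r in auto)
      also have "\<dots> = h2_mean f r" using sums by (rule sums_unique[symmetric])
      also have "\<dots> \<le> B" using B r by auto
      finally show ?thesis .
    qed
    then show "\<forall>\<^sub>F r in at_left 1. (\<Sum>i<n. (cmod (a i))^2 * r^(2*i)) \<le> B"
      using eventually_at_left_real[of 0 "1::real"] by (auto elim: eventually_mono)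
  qed auto
  then have "summable (\<lambda>n. (cmod (a n))^2)" by (intro summableI_nonneg_bounded) auto
  with ser that show ?thesis by blast
qed

lemma power_series_tail_h2_mean_small:
  fixes a :: "nat \<Rightarrow> complex"
  assumes ser: "\<And>z. z \<in> unit_disc \<Longrightarrow> (\<lambda>n. a n * z^n) sums f z"
    and summable: "summable (\<lambda>n. (cmod (a n))^2)" and "\<eta> > 0"
  obtains N where "\<And>r. 0 \<le> r \<Longrightarrow> r < 1 \<Longrightarrow> h2_mean (\<lambda>z. f z - (\<Sum>n<N. a n * z^n)) r \<le> \<eta>"
proof -
  obtain N where N: "norm (\<Sum>i. (cmod (a (i + N)))^2) < \<eta>"
    using suminf_exist_split[OF \<open>\<eta> > 0\<close> summable] by blast
  define b where "b n = (if n < N then 0 else a n)" for n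
  have summable_b: "summable (\<lambda>n. (cmod (b n))^2)"
    by (rule summable_comparison_test[OF _ summable]) (auto simp: b_def)
  have "(\<Sum>n. (cmod (b n))^2) = (\<Sum>i. (cmod (a (i + N)))^2)"
    using suminf_split_initial_segment[OF summable_b, of N] by (simp add: b_def)
  then have tail: "(\<Sum>n. (cmod (b n))^2) < \<eta>" using N by simp
  have "(\<lambda>n. b n * z^n) = (\<lambda>n. a n * z^n - (if n \<in> {..<N} then a n * z^n else 0))" for z
    by (auto simp: b_def)
  then have ser_b: "(\<lambda>n. b n * z^n) sums (f z - (\<Sum>n<N. a n * z^n))" if "z \<in> unit_disc" for z
    using sums_diff[OF ser[OF that] sums_If_finite_set[of "{..<N}"]] by simp
  show ?thesis
  proof (rule that)
    fix r :: real assume r: "0 \<le> r" "r < 1"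
    have sums: "(\<lambda>n. (cmod (b n))^2 * r^(2*n)) sums h2_mean (\<lambda>z. f z - (\<Sum>n<N. a n * z^n)) r"
      by (rule h2_mean_power_series_sums[OF ser_b r])
    have "(cmod (b n))^2 * r^(2*n) \<le> (cmod (b n))^2" for n
      using r by (intro mult_left_le power_le_one) auto
    then have "h2_mean (\<lambda>z. f z - (\<Sum>n<N. a n * z^n)) r \<le> (\<Sum>n. (cmod (b n))^2)"
      using suminf_le[OF _ sums_summable[OF sums] summable_b] sums by (simp add: sums_iff)
    with tail show "h2_mean (\<lambda>z. f z - (\<Sum>n<N. a n * z^n)) r \<le> \<eta>" by simp
  qed
qed

lemma norm_poly_le_sum_norm_coeffs:
  fixes a :: "nat \<Rightarrow> 'a::real_normed_div_algebra"
  assumes "norm z \<le> 1"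
  shows "norm (\<Sum>n<N. a n * z^n) \<le> (\<Sum>n<N. norm (a n))"
proof -
  have "norm (\<Sum>n<N. a n * z^n) \<le> (\<Sum>n<N. norm (a n * z^n))" by (rule norm_sum)
  also have "\<dots> \<le> (\<Sum>n<N. norm (a n))"
    using assms by (intro sum_mono) (simp add: norm_mult norm_power mult_left_le power_le_one)
  finally show ?thesis .
qed

lemma norm_mult_power2_le:
  fixes w u :: "'a::real_normed_div_algebra"
  assumes "norm w \<le> K"
  shows "(norm (w * u))^2 \<le> K^2 * (norm u)^2"
  using assms by (simp add: norm_mult power_mult_distrib mult_right_mono power_mono)

lemma H2_mult_Hinf:
  assumes g: "g \<in> Hinf" and f: "f \<in> H2"
  shows "(\<lambda>z. g z * f z) \<in> H2"
proof -
  have holo: "g holomorphic_on unit_disc" "f holomorphic_on unit_disc"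
    using f g by (auto simp: H2_def Hinf_def)
  obtain K where K: "\<And>z. z \<in> unit_disc \<Longrightarrow> cmod (g z) \<le> K"
    using g unfolding Hinf_def bounded_iff by blast
  obtain B where B: "\<And>r. 0 \<le> r \<Longrightarrow> r < 1 \<Longrightarrow> h2_mean f r \<le> B"
    using H2_h2_mean_bounded[OF f] by blast
  have "h2_mean (\<lambda>z. g z * f z) r \<le> K^2 * B" if r: "0 \<le> r" "r < 1" for r
  proof -
    have "h2_mean (\<lambda>z. g z * f z) r \<le> K^2 * h2_mean f r"
      using holo by (intro h2_mean_le_scaled norm_mult_power2_le K r holomorphic_on_imp_continuous_on
          holomorphic_intros)
    also have "\<dots> \<le> K^2 * B" using B[OF r] by (intro mult_left_mono) auto
    finally show ?thesis .
  qed
  then have "bdd_above (h2_mean (\<lambda>z. g z * f z) ` {0..<1})" by (intro bdd_aboveI2) auto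
  with holo show ?thesis by (auto simp: H2_def intro: holomorphic_intros)
qed

lemma norm_mult_add_power2_le:
  fixes u p q :: "'a::real_normed_div_algebra"
  assumes "norm u \<le> C" "norm p \<le> P"
  shows "(norm (u * (p + q)))^2 \<le> 2 * P^2 * (norm u)^2 + 2 * C^2 * (norm q)^2"
proof -
  have "norm (u * (p + q)) \<le> norm u * norm p + norm u * norm q"
    by (simp add: norm_mult norm_triangle_ineq mult_left_mono flip: distrib_left)
  also have "\<dots> \<le> norm u * P + C * norm q"
    using assms by (intro add_mono mult_left_mono mult_right_mono) auto
  finally have "(norm (u * (p + q)))^2 \<le> (norm u * P + C * norm q)^2"
    by (intro power_mono) auto
  also have "\<dots> \<le> 2 * (norm u * P)^2 + 2 * (C * norm q)^2"
    using zero_le_power2[of "norm u * P - C * norm q"] by (simp add: power2_diff power2_sum)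
  finally show ?thesis by (simp add: power_mult_distrib mult_ac)
qed

lemma H2_mult_small_multiplier:
  assumes f: "f \<in> H2" and "\<epsilon> > 0"
  obtains \<eta> where "\<eta> > 0"
    "\<And>u r. continuous_on unit_disc u \<Longrightarrow> (\<And>z. z \<in> unit_disc \<Longrightarrow> cmod (u z) \<le> C) \<Longrightarrow>
       0 \<le> r \<Longrightarrow> r < 1 \<Longrightarrow> h2_mean u r \<le> \<eta> \<Longrightarrow> h2_mean (\<lambda>z. u z * f z) r \<le> \<epsilon>"
proof -
  have holo: "f holomorphic_on unit_disc" using f by (simp add: H2_def)
  have denom_pos: "0 < x^2 + 1" for x :: real by (simp add: add_nonneg_pos)
  have pos: "\<epsilon> / (4 * (x^2 + 1)) > 0" for x :: real
    using \<open>\<epsilon> > 0\<close> denom_pos[of x] by (intro divide_pos_pos mult_pos_pos) auto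
  have half: "2 * x^2 * (\<epsilon> / (4 * (x^2 + 1))) \<le> \<epsilon> / 2" for x :: real
  proof -
    have "2 * x^2 * (\<epsilon> / (4 * (x^2 + 1))) = \<epsilon> / 2 * (x^2 / (x^2 + 1))"
      using denom_pos[of x] by (simp add: field_simps)
    also have "\<dots> \<le> \<epsilon> / 2"
      using \<open>\<epsilon> > 0\<close> denom_pos[of x] by (intro mult_left_le) (simp_all add: divide_le_eq_1)
    finally show ?thesis .
  qed
  obtain a where ser: "\<And>z. z \<in> unit_disc \<Longrightarrow> (\<lambda>n. a n * z^n) sums f z"
    and summable: "summable (\<lambda>n. (cmod (a n))^2)"
    using H2_taylor_coeffs_square_summable[OF f] by blast
  obtain N where tail: "\<And>r. 0 \<le> r \<Longrightarrow> r < 1 \<Longrightarrow>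
      h2_mean (\<lambda>z. f z - (\<Sum>n<N. a n * z^n)) r \<le> \<epsilon> / (4 * (C^2 + 1))"
    using power_series_tail_h2_mean_small[OF ser summable pos] by blast
  define p where "p = (\<lambda>z. \<Sum>n<N. a n * z^n)"
  define q where "q = (\<lambda>z. f z - p z)"
  define P where "P = (\<Sum>n<N. cmod (a n))"
  have holo_q: "q holomorphic_on unit_disc" unfolding q_def p_def using holo by (intro holomorphic_intros)
  show ?thesis
  proof (rule that)
    show "\<epsilon> / (4 * (P^2 + 1)) > 0" by (rule pos)
    fix u r assume u: "continuous_on unit_disc u" and bound: "\<And>z. z \<in> unit_disc \<Longrightarrow> cmod (u z) \<le> C"
      and r: "0 \<le> r" "r < 1" and small: "h2_mean u r \<le> \<epsilon> / (4 * (P^2 + 1))"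
    have pointwise: "(cmod (u z * f z))^2 \<le> 2*P^2 * (cmod (u z))^2 + 2*C^2 * (cmod (q z))^2"
      if "z \<in> unit_disc" for z
      using norm_mult_add_power2_le[OF bound[OF that], of "p z" P "q z"] that
      by (simp add: q_def p_def P_def norm_poly_le_sum_norm_coeffs)
    have "continuous_on unit_disc (\<lambda>z. u z * f z)"
      using u holomorphic_on_imp_continuous_on[OF holo] by (rule continuous_on_mult)
    then have "h2_mean (\<lambda>z. u z * f z) r \<le> 2*P^2 * h2_mean u r + 2*C^2 * h2_mean q r"
      by (rule h2_mean_le_combination[OF _ u holomorphic_on_imp_continuous_on[OF holo_q] pointwise r])
    also have "\<dots> \<le> 2*P^2 * (\<epsilon> / (4 * (P^2 + 1))) + 2*C^2 * (\<epsilon> / (4 * (C^2 + 1)))"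
      using small tail[OF r] by (intro add_mono mult_left_mono) (auto simp: q_def p_def)
    also have "\<dots> \<le> \<epsilon>/2 + \<epsilon>/2"
      by (intro add_mono half)
    finally show "h2_mean (\<lambda>z. u z * f z) r \<le> \<epsilon>" by simp
  qed
qed

locale bounded_exp_holomorphic =
  fixes v :: "complex \<Rightarrow> complex" and M :: real
  assumes holomorphic: "v holomorphic_on unit_disc"
    and norm_exp_le: "\<And>z. z \<in> unit_disc \<Longrightarrow> cmod (exp (v z)) \<le> M"
    and one_le_bound: "1 \<le> M"
begin

definition frac_power :: "real \<Rightarrow> complex \<Rightarrow> complex" where
  "frac_power t z = exp (of_real t * v z)"

lemma frac_power_holomorphic: "frac_power t holomorphic_on unit_disc"
  unfolding frac_power_def by (intro holomorphic_intros holomorphic)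

lemma frac_power_add: "frac_power (s + t) z = frac_power s z * frac_power t z"
  unfolding frac_power_def by (simp add: distrib_right exp_add)

lemma frac_power_0: "frac_power 0 z = 1"
  unfolding frac_power_def by simp

lemma frac_power_1: "frac_power 1 z = exp (v z)"
  unfolding frac_power_def by simp

lemma norm_frac_power_le:
  assumes "0 \<le> t" "t \<le> T" "z \<in> unit_disc"
  shows "cmod (frac_power t z) \<le> M powr T"
proof -
  have "cmod (frac_power t z) = cmod (exp (v z)) powr t"
    unfolding frac_power_def by (simp add: norm_exp_eq_Re powr_def)
  also have "\<dots> \<le> M powr t" using assms norm_exp_le by (intro powr_mono2) auto
  also have "\<dots> \<le> M powr T" using assms one_le_bound by (intro powr_mono) auto
  finally show ?thesis .
qed

lemma frac_power_Hinf: "0 \<le> t \<Longrightarrow> frac_power t \<in> Hinf"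
  unfolding Hinf_def bounded_iff using frac_power_holomorphic norm_frac_power_le by blast

lemma h2_mean_frac_power_minus_one_small:
  assumes "\<eta> > 0"
  obtains \<delta> where "\<delta> > 0"
    "\<And>s r. 0 \<le> s \<Longrightarrow> s < \<delta> \<Longrightarrow> 0 \<le> r \<Longrightarrow> r < 1 \<Longrightarrow> h2_mean (\<lambda>z. frac_power s z - 1) r \<le> \<eta>"
proof -
  define E where "E s = (M powr s)^2 - 2 * Re (frac_power s 0) + 1" for s
  have "isCont E 0" unfolding E_def frac_power_def using one_le_bound by (intro continuous_intros) auto
  moreover have "E 0 = 0" using one_le_bound by (simp add: E_def frac_power_0)
  ultimately obtain \<delta> where "\<delta> > 0" and \<delta>: "\<And>s. \<bar>s\<bar> < \<delta> \<Longrightarrow> \<bar>E s\<bar> < \<eta>"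
    using assms unfolding continuous_at_eps_delta dist_real_def by force
  show ?thesis
  proof (rule that[OF \<open>\<delta> > 0\<close>])
    fix s r :: real assume s: "0 \<le> s" "s < \<delta>" and r: "0 \<le> r" "r < 1"
    have "h2_mean (\<lambda>z. frac_power s z - 1) r = h2_mean (frac_power s) r - 2 * Re (frac_power s 0) + 1"
      by (rule h2_mean_minus_one[OF frac_power_holomorphic r])
    also have "h2_mean (frac_power s) r \<le> (M powr s)^2"
      using s r norm_frac_power_le[OF _ order_refl]
      by (intro h2_mean_le_square_bound holomorphic_on_imp_continuous_on frac_power_holomorphic) auto
    finally show "h2_mean (\<lambda>z. frac_power s z - 1) r \<le> \<eta>"
      using \<delta>[of s] s unfolding E_def by auto
  qed
qed

lemma norm_frac_power_minus_one_le:
  assumes "0 \<le> s" "s \<le> 1" "z \<in> unit_disc"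
  shows "cmod (frac_power s z - 1) \<le> M + 1"
  using norm_triangle_ineq4[of "frac_power s z" 1] norm_frac_power_le[OF assms] one_le_bound by simp

lemma norm_frac_power_increment:
  "cmod (frac_power t z * w - frac_power t0 z * w) = cmod (frac_power (min t t0) z * ((frac_power \<bar>t - t0\<bar> z - 1) * w))"
proof (cases "t0 \<le> t")
  case True
  have "frac_power t z * w - frac_power t0 z * w = frac_power t0 z * ((frac_power (t - t0) z - 1) * w)"
    using frac_power_add[of t0 "t - t0" z] by (simp add: algebra_simps)
  then show ?thesis using True by simp
next
  case False
  have "frac_power t z * w - frac_power t0 z * w = - (frac_power t z * ((frac_power (t0 - t) z - 1) * w))"
    using frac_power_add[of t "t0 - t" z] by (simp add: algebra_simps)
  then show ?thesis using False by simp
qed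

lemma h2_mean_frac_power_increment_le:
  assumes "f holomorphic_on unit_disc" "0 \<le> t" "0 \<le> t0" "0 \<le> r" "r < 1"
  shows "h2_mean (\<lambda>z. frac_power t z * f z - frac_power t0 z * f z) r
    \<le> (M powr t0)^2 * h2_mean (\<lambda>z. (frac_power \<bar>t - t0\<bar> z - 1) * f z) r"
proof (rule h2_mean_le_scaled)
  fix z assume "z \<in> unit_disc"
  then have "cmod (frac_power (min t t0) z) \<le> M powr t0"
    using assms by (intro norm_frac_power_le) auto
  then show "(cmod (frac_power t z * f z - frac_power t0 z * f z))^2
      \<le> (M powr t0)^2 * (cmod ((frac_power \<bar>t - t0\<bar> z - 1) * f z))^2"
    unfolding norm_frac_power_increment by (rule norm_mult_power2_le)
qed (use assms in \<open>auto intro!: holomorphic_on_imp_continuous_on holomorphic_intros frac_power_holomorphic\<close>)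

lemma frac_power_mult_tendsto:
  assumes f: "f \<in> H2" and "0 \<le> t0"
  shows "((\<lambda>t. h2_norm (\<lambda>z. frac_power t z * f z - frac_power t0 z * f z)) \<longlongrightarrow> 0) (at t0 within {0..})"
proof (rule tendstoI)
  fix \<epsilon> :: real assume "\<epsilon> > 0"
  define K where "K = M powr t0"
  have "K > 0" using one_le_bound by (simp add: K_def)
  obtain \<eta> where "\<eta> > 0" and \<eta>: "\<And>u r. continuous_on unit_disc u \<Longrightarrow>
      (\<And>z. z \<in> unit_disc \<Longrightarrow> cmod (u z) \<le> M + 1) \<Longrightarrow> 0 \<le> r \<Longrightarrow> r < 1 \<Longrightarrow>
      h2_mean u r \<le> \<eta> \<Longrightarrow> h2_mean (\<lambda>z. u z * f z) r \<le> \<epsilon>^2 / (2 * K^2)"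
    using H2_mult_small_multiplier[OF f, of "\<epsilon>^2 / (2 * K^2)" "M + 1"] \<open>\<epsilon> > 0\<close> \<open>K > 0\<close> by auto
  obtain \<delta> where "\<delta> > 0" and \<delta>: "\<And>s r. 0 \<le> s \<Longrightarrow> s < \<delta> \<Longrightarrow> 0 \<le> r \<Longrightarrow> r < 1 \<Longrightarrow>
      h2_mean (\<lambda>z. frac_power s z - 1) r \<le> \<eta>"
    using h2_mean_frac_power_minus_one_small[OF \<open>\<eta> > 0\<close>] by blast
  have mean_bound: "h2_mean (\<lambda>z. frac_power t z * f z - frac_power t0 z * f z) r \<le> \<epsilon>^2 / 2"
    if t: "0 \<le> t" "\<bar>t - t0\<bar> < min \<delta> 1" and r: "0 \<le> r" "r < 1" for t r
  proof -
    have "h2_mean (\<lambda>z. (frac_power \<bar>t - t0\<bar> z - 1) * f z) r \<le> \<epsilon>^2 / (2 * K^2)"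
      using t r norm_frac_power_minus_one_le
      by (intro \<eta> \<delta> holomorphic_on_imp_continuous_on holomorphic_intros frac_power_holomorphic) auto
    then have "K^2 * h2_mean (\<lambda>z. (frac_power \<bar>t - t0\<bar> z - 1) * f z) r \<le> \<epsilon>^2 / 2"
      using \<open>K > 0\<close> by (simp add: field_simps)
    moreover have "f holomorphic_on unit_disc" using f by (simp add: H2_def)
    ultimately show ?thesis
      using h2_mean_frac_power_increment_le[OF _ t(1) \<open>0 \<le> t0\<close> r] unfolding K_def by force
  qed
  have "dist (h2_norm (\<lambda>z. frac_power t z * f z - frac_power t0 z * f z)) 0 < \<epsilon>"
    if "0 \<le> t" "\<bar>t - t0\<bar> < min \<delta> 1" for t
  proof -
    have "sqrt (\<epsilon>^2 / 2) < \<epsilon>" using \<open>\<epsilon> > 0\<close> real_sqrt_less_mono[of "\<epsilon>^2 / 2" "\<epsilon>^2"] by simp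
    with h2_norm_le_sqrt[OF mean_bound[OF that]] show ?thesis by (simp add: dist_real_def)
  qed
  then show "\<forall>\<^sub>F t in at t0 within {0..}. dist (h2_norm (\<lambda>z. frac_power t z * f z - frac_power t0 z * f z)) 0 < \<epsilon>"
    unfolding eventually_at using \<open>\<delta> > 0\<close>
    by (intro exI[of _ "min \<delta> 1"]) (auto simp: dist_real_def)
qed

lemma C0_semigroup_frac_power_mult: "C0_semigroup_H2 (\<lambda>t f z. frac_power t z * f z)"
  unfolding C0_semigroup_H2_def
  using H2_mult_Hinf frac_power_Hinf frac_power_mult_tendsto
  by (auto simp: frac_power_0 frac_power_add)

lemma embeddable_exp_mult: "embeddable_toeplitz_semigroup (\<lambda>f z. exp (v z) * f z)"
  unfolding embeddable_toeplitz_semigroup_def analytic_toeplitz_op_def is_toeplitz_with_def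
  using C0_semigroup_frac_power_mult frac_power_Hinf
  by (intro exI[of _ "\<lambda>t f z. frac_power t z * f z"]) (auto simp: frac_power_1)

end

lemma outer_nonzero:
  assumes "outer f" "z \<in> unit_disc"
  shows "f z \<noteq> 0"
  using assms unfolding outer_def by force

lemma embeddable_toeplitz_semigroup_cong:
  assumes "\<And>f z. f \<in> H2 \<Longrightarrow> z \<in> unit_disc \<Longrightarrow> S f z = S' f z"
  shows "embeddable_toeplitz_semigroup S \<longleftrightarrow> embeddable_toeplitz_semigroup S'"
  using assms unfolding embeddable_toeplitz_semigroup_def by auto

theorem mainTheorem6:
  fixes \<phi> :: "complex \<Rightarrow> complex"
  assumes "\<phi> \<in> Hinf" and "outer \<phi>"
  shows "embeddable_toeplitz_semigroup (\<lambda>f z. \<phi> z * f z)"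
proof -
  have holo: "\<phi> holomorphic_on unit_disc" and "bounded (\<phi> ` unit_disc)"
    using assms(1) by (auto simp: Hinf_def)
  then obtain K where K: "\<And>z. z \<in> unit_disc \<Longrightarrow> cmod (\<phi> z) \<le> K"
    unfolding bounded_iff by blast
  obtain v where "v holomorphic_on unit_disc" and v: "\<And>z. z \<in> unit_disc \<Longrightarrow> exp (v z) = \<phi> z"
    using holomorphic_logarithm_exists[of unit_disc \<phi> 0] holo outer_nonzero[OF assms(2)] by auto
  then interpret bounded_exp_holomorphic v "max 1 K"
    using K by unfold_locales (auto simp: le_max_iff_disj)
  have "embeddable_toeplitz_semigroup (\<lambda>f z. exp (v z) * f z)" by (rule embeddable_exp_mult)
  then show ?thesis by (subst (asm) embeddable_toeplitz_semigroup_cong) (simp_all add: v)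
qed

end
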